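(* Let $I$ be a resident-minimal instance and $J$ a resident-changeless and hospital-complete extension of $I$. Then $J$ is resident-minimal, $\mathrm{prop}(I)=\mathrm{prop}(J)$, and $\mathrm{tent}(I)\setminus\mathrm{pend}(I)\subseteq\mathrm{tent}(J)\subseteq\mathrm{tent}(I)$.
   Context: An instance $I$ consists of finite disjoint sets $R$ (residents) and $H$ (hospitals), a positive integer quota $q_h$ for each $h\in H$, for each $r\in R$ a preference list of $r$ (a sequence of distinct members of $H$, not necessarily all), and for each $h\in H$ a preference list of $h$ (a sequence of distinct members of $R$). A list is complete if it contains every member of the opposite side; an instance is hospital-complete if every hospital's list is complete. A match is a pair $(r,h)\in R\times H$. For a set $M$ of matches, $\mathrm{res}_h M=\{r:(r,h)\in M\}$, $\mathrm{res}\,M=\{r:(r,h)\in M\text{ for some }h\}$. $J$ is an extension of $I$ (same $R,H$, quotas) if every list of $J$ has the corresponding list of $I$ as a prefix; it is resident-changeless if every resident's list is the same in $I$ and $J$. An event is $(r,h)^+$ (proposal) or $(r,h)^-$ (rejection). For an event sequence $\sigma$, $\mathrm{prop}(\sigma)$, $\mathrm{rej}(\sigma)$ are the sets of matches proposed/rejected in $\sigma$, $\mathrm{tent}(\sigma)=\mathrm{prop}(\sigma)\setminus\mathrm{rej}(\sigma)$, and $\mathrm{pend}_I(\sigma)$ is the set of $(r,h)\in\mathrm{tent}(\sigma)$ with $r$ not on the list of $h$ in $I$. A match $(r,h)\in M$ is ousted from $M$ in $I$ if the list of $h$ in $I$ contains at least $q_h$ residents of $\mathrm{res}_h M$ and either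 $r$ is not on it or $r$ is preceded on it by at least $q_h$ residents of $\mathrm{res}_h M$. $I$-feasible sequences: the empty sequence is $I$-feasible; if $\sigma$ is $I$-feasible then $\sigma+(r,h)^+$ is $I$-feasible if $r\notin\mathrm{res}\,\mathrm{tent}(\sigma)$, $(r,h)\notin\mathrm{prop}(\sigma)$, $h$ is on the list of $r$ in $I$ and $(r,h')\in\mathrm{rej}(\sigma)$ for every $h'$ preceding $h$ on it; and $\sigma+(r,h)^-$ is $I$-feasible if $(r,h)$ is ousted from $\mathrm{prop}(\sigma)$ in $I$ and $(r,h)\notin\mathrm{rej}(\sigma)$. All maximal $I$-feasible sequences contain the same events; $\mathrm{prop}(I),\mathrm{tent}(I),\mathrm{pend}(I)$ denote $\mathrm{prop}(\sigma),\mathrm{tent}(\sigma),\mathrm{pend}_I(\sigma)$ for any maximal $I$-feasible $\sigma$. $I$ is resident-minimal if $\mathrm{prop}(I)$ equals the set of matches $(r,h)$ with $h$ on the list of $r$ in $I$. *)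

theory Defs
  imports Main
begin

record ('r,'h) inst =
  quota :: "'h \<Rightarrow> nat"
  rpref :: "'r \<Rightarrow> 'h list"
  hpref :: "'h \<Rightarrow> 'r list"

text \<open>An instance over resident set R and hospital set H (disjointness is
automatic since they live in different types). Lists of non-members are
required to be empty (they are irrelevant by convention).\<close>
definition valid_instance :: "'r set \<Rightarrow> 'h set \<Rightarrow> ('r,'h) inst \<Rightarrow> bool" where
  "valid_instance R H I \<longleftrightarrow> finite R \<and> finite H
     \<and> (\<forall>h\<in>H. quota I h > 0)
     \<and> (\<forall>r\<in>R. distinct (rpref I r) \<and> set (rpref I r) \<subseteq> H)
     \<and> (\<forall>h\<in>H. distinct (hpref I h) \<and> set (hpref I h) \<subseteq> R)
     \<and> (\<forall>r. r \<notin> R \<longrightarrow> rpref I r = [])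
     \<and> (\<forall>h. h \<notin> H \<longrightarrow> hpref I h = [])"

definition hospital_complete :: "'r set \<Rightarrow> 'h set \<Rightarrow> ('r,'h) inst \<Rightarrow> bool" where
  "hospital_complete R H I \<longleftrightarrow> (\<forall>h\<in>H. set (hpref I h) = R)"

definition is_extension :: "'r set \<Rightarrow> 'h set \<Rightarrow> ('r,'h) inst \<Rightarrow> ('r,'h) inst \<Rightarrow> bool" where
  "is_extension R H I J \<longleftrightarrow> valid_instance R H I \<and> valid_instance R H J
     \<and> (\<forall>h\<in>H. quota J h = quota I h)
     \<and> (\<forall>r. \<exists>zs. rpref J r = rpref I r @ zs)
     \<and> (\<forall>h. \<exists>zs. hpref J h = hpref I h @ zs)"

definition resident_changeless :: "('r,'h) inst \<Rightarrow> ('r,'h) inst \<Rightarrow> bool" where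
  "resident_changeless I J \<longleftrightarrow> (\<forall>r. rpref J r = rpref I r)"

datatype ('r,'h) event = Prop 'r 'h | Rej 'r 'h

definition proposed :: "('r,'h) event list \<Rightarrow> ('r \<times> 'h) set" where
  "proposed \<sigma> = {(r,h). Prop r h \<in> set \<sigma>}"

definition rejected :: "('r,'h) event list \<Rightarrow> ('r \<times> 'h) set" where
  "rejected \<sigma> = {(r,h). Rej r h \<in> set \<sigma>}"

definition tentative :: "('r,'h) event list \<Rightarrow> ('r \<times> 'h) set" where
  "tentative \<sigma> = proposed \<sigma> - rejected \<sigma>"

definition pending_seq :: "('r,'h) inst \<Rightarrow> ('r,'h) event list \<Rightarrow> ('r \<times> 'h) set" where
  "pending_seq I \<sigma> = {(r,h) \<in> tentative \<sigma>. r \<notin> set (hpref I h)}"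

definition res_h :: "('r \<times> 'h) set \<Rightarrow> 'h \<Rightarrow> 'r set" where
  "res_h M h = {r. (r,h) \<in> M}"

definition res :: "('r \<times> 'h) set \<Rightarrow> 'r set" where
  "res M = {r. \<exists>h. (r,h) \<in> M}"

definition ousted :: "('r,'h) inst \<Rightarrow> ('r \<times> 'h) set \<Rightarrow> 'r \<Rightarrow> 'h \<Rightarrow> bool" where
  "ousted I M r h \<longleftrightarrow> (r,h) \<in> M
     \<and> card (set (hpref I h) \<inter> res_h M h) \<ge> quota I h
     \<and> (r \<notin> set (hpref I h)
        \<or> card (set (takeWhile (\<lambda>x. x \<noteq> r) (hpref I h)) \<inter> res_h M h) \<ge> quota I h)"

inductive feasible :: "('r,'h) inst \<Rightarrow> ('r,'h) event list \<Rightarrow> bool" for I where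
  Nil: "feasible I []"
| Propose: "\<lbrakk> feasible I \<sigma>; r \<notin> res (tentative \<sigma>); (r,h) \<notin> proposed \<sigma>;
             h \<in> set (rpref I r);
             \<forall>h' \<in> set (takeWhile (\<lambda>x. x \<noteq> h) (rpref I r)). (r,h') \<in> rejected \<sigma> \<rbrakk>
           \<Longrightarrow> feasible I (\<sigma> @ [Prop r h])"
| Reject: "\<lbrakk> feasible I \<sigma>; ousted I (proposed \<sigma>) r h; (r,h) \<notin> rejected \<sigma> \<rbrakk>
           \<Longrightarrow> feasible I (\<sigma> @ [Rej r h])"

definition maximal_feasible :: "('r,'h) inst \<Rightarrow> ('r,'h) event list \<Rightarrow> bool" where
  "maximal_feasible I \<sigma> \<longleftrightarrow> feasible I \<sigma> \<and> \<not> (\<exists>e. feasible I (\<sigma> @ [e]))"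

text \<open>prop(I), tent(I), pend(I): computed from any maximal I-feasible sequence.\<close>
definition some_max :: "('r,'h) inst \<Rightarrow> ('r,'h) event list" where
  "some_max I = (SOME \<sigma>. maximal_feasible I \<sigma>)"

definition propI :: "('r,'h) inst \<Rightarrow> ('r \<times> 'h) set" where
  "propI I = proposed (some_max I)"

definition tentI :: "('r,'h) inst \<Rightarrow> ('r \<times> 'h) set" where
  "tentI I = tentative (some_max I)"

definition pendI :: "('r,'h) inst \<Rightarrow> ('r \<times> 'h) set" where
  "pendI I = pending_seq I (some_max I)"

definition resident_minimal :: "('r,'h) inst \<Rightarrow> bool" where
  "resident_minimal I \<longleftrightarrow> propI I = {(r,h). h \<in> set (rpref I r)}"

end

theory Submission
  imports Defs
begin

text \<open>Residents' lists are unchanged, and appending residents to a hospital's list can only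
turn a resident into an ousted one, never back: a listed resident keeps the same predecessors,
while a resident that was unlisted in \<open>I\<close> now sits behind the whole old list. Hence every
\<open>I\<close>-feasible sequence is \<open>J\<close>-feasible. Since every feasible sequence is contained in every
maximal one, \<open>J\<close> proposes all acceptable pairs, as \<open>I\<close> does. With the proposals fixed, the
rejections of a maximal sequence are exactly the ousted matches, so \<open>tent(J) \<subseteq> tent(I)\<close>;
and for a resident on the \<open>I\<close>-list of \<open>h\<close> the ousting condition is the same in \<open>I\<close> and \<open>J\<close>,
which gives \<open>tent(I) - pend(I) \<subseteq> tent(J)\<close>.\<close>

lemma valid_instance_acceptable:
  assumes "valid_instance R H K" "h \<in> set (rpref K r)"
  shows "r \<in> R \<and> h \<in> H"
  using assms by (cases "r \<in> R") (auto simp: valid_instance_def)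

lemma ousted_mono:
  assumes "ousted K M r h" "M \<subseteq> M'"
  shows "ousted K M' r h"
proof -
  have "res_h M h \<subseteq> res_h M' h" using assms(2) by (auto simp: res_h_def)
  then have grow: "card (set xs \<inter> res_h M h) \<le> card (set xs \<inter> res_h M' h)" for xs
    by (intro card_mono) auto
  have "(r,h) \<in> M'" using assms unfolding ousted_def by blast
  then show ?thesis
    using assms(1) grow[of "hpref K h"] grow[of "takeWhile (\<lambda>x. x \<noteq> r) (hpref K h)"]
    unfolding ousted_def by (meson order_trans)
qed

lemma ousted_append_hpref:
  assumes "hpref J h = hpref I h @ zs" "quota J h = quota I h" "r \<in> set (hpref J h)"
    and "ousted I M r h"
  shows "ousted J M r h"
proof -
  have listed: "card (set (hpref I h) \<inter> res_h M h) \<le> card (set (hpref J h) \<inter> res_h M h)"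
    by (rule card_mono) (auto simp: assms(1))
  show ?thesis
  proof (cases "r \<in> set (hpref I h)")
    case True
    then have "takeWhile (\<lambda>x. x \<noteq> r) (hpref J h) = takeWhile (\<lambda>x. x \<noteq> r) (hpref I h)"
      by (simp add: assms(1))
    then show ?thesis using assms(2-4) listed True unfolding ousted_def by auto
  next
    case False
    then have "takeWhile (\<lambda>x. x \<noteq> r) (hpref J h) = hpref I h @ takeWhile (\<lambda>x. x \<noteq> r) zs"
      by (auto simp: assms(1) intro!: takeWhile_append2)
    then have "card (set (hpref I h) \<inter> res_h M h)
        \<le> card (set (takeWhile (\<lambda>x. x \<noteq> r) (hpref J h)) \<inter> res_h M h)"
      by (intro card_mono) auto
    then show ?thesis using assms(2-4) listed False unfolding ousted_def by auto
  qed
qed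

lemma ousted_append_hpref_iff:
  assumes "hpref J h = hpref I h @ zs" "quota J h = quota I h" "r \<in> set (hpref I h)"
  shows "ousted J M r h \<longleftrightarrow> ousted I M r h"
proof
  have "card (set (takeWhile (\<lambda>x. x \<noteq> r) (hpref I h)) \<inter> res_h M h)
      \<le> card (set (hpref I h) \<inter> res_h M h)"
    by (intro card_mono) (auto dest: set_takeWhileD)
  moreover have "takeWhile (\<lambda>x. x \<noteq> r) (hpref J h) = takeWhile (\<lambda>x. x \<noteq> r) (hpref I h)"
    using assms(3) by (simp add: assms(1))
  moreover have "r \<in> set (hpref J h)" using assms(3) by (simp add: assms(1))
  moreover assume "ousted J M r h"
  ultimately show "ousted I M r h" using assms(2,3) unfolding ousted_def by auto
next
  assume "ousted I M r h"
  then show "ousted J M r h" using ousted_append_hpref assms by fastforce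
qed

lemma feasible_proposal:
  assumes "feasible K \<tau>" "Prop r h \<in> set \<tau>"
  shows "h \<in> set (rpref K r)
    \<and> (\<forall>h'\<in>set (takeWhile (\<lambda>x. x \<noteq> h) (rpref K r)). Rej r h' \<in> set \<tau>)"
  using assms by (induction rule: feasible.induct) (auto simp: rejected_def)

lemma feasible_proposed_acceptable:
  assumes "feasible K \<tau>"
  shows "proposed \<tau> \<subseteq> {(r,h). h \<in> set (rpref K r)}"
  using feasible_proposal[OF assms] by (auto simp: proposed_def)

lemma feasible_rejection_ousted:
  assumes "feasible K \<tau>" "Rej r h \<in> set \<tau>"
  shows "ousted K (proposed \<tau>) r h"
  using assms
proof (induction arbitrary: r h rule: feasible.induct)
  case Nil
  then show ?case by simp
next
  case (Propose \<sigma> r' h')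
  have "proposed \<sigma> \<subseteq> proposed (\<sigma> @ [Prop r' h'])" by (auto simp: proposed_def)
  with Propose show ?case by (auto intro: ousted_mono)
next
  case (Reject \<sigma> r' h')
  have "proposed (\<sigma> @ [Rej r' h']) = proposed \<sigma>" by (auto simp: proposed_def)
  with Reject show ?case by auto
qed

lemma feasible_rejection_proposed:
  assumes "feasible K \<tau>" "Rej r h \<in> set \<tau>"
  shows "Prop r h \<in> set \<tau>"
  using feasible_rejection_ousted[OF assms] by (simp add: ousted_def proposed_def)

lemma feasible_distinct:
  assumes "feasible K \<tau>"
  shows "distinct \<tau>"
  using assms by (induction rule: feasible.induct) (auto simp: proposed_def rejected_def)

lemma takeWhile_neq_cases:
  "a \<in> set xs \<Longrightarrow> b \<in> set xs \<Longrightarrow> a \<noteq> b \<Longrightarrow>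
   a \<in> set (takeWhile (\<lambda>x. x \<noteq> b) xs) \<or> b \<in> set (takeWhile (\<lambda>x. x \<noteq> a) xs)"
  by (induction xs) auto

lemma maximal_feasible_extend:
  assumes "maximal_feasible K \<tau>" "feasible K (\<tau> @ [e])"
  shows False
  using assms by (auto simp: maximal_feasible_def)

text \<open>The resident \<open>r\<close> cannot hold a tentative match in \<open>\<tau>\<close>: a hospital before \<open>h\<close> on
his list was rejected already in \<open>\<sigma>\<close>, and one after \<open>h\<close> requires a rejection by \<open>h\<close>, hence a
proposal to \<open>h\<close> in \<open>\<tau>\<close>.\<close>
lemma maximal_feasible_contains_proposal:
  assumes "maximal_feasible K \<tau>" "set \<sigma> \<subseteq> set \<tau>"
    and acceptable: "h \<in> set (rpref K r)"
    and before: "\<forall>h'\<in>set (takeWhile (\<lambda>x. x \<noteq> h) (rpref K r)). (r,h') \<in> rejected \<sigma>"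
  shows "Prop r h \<in> set \<tau>"
proof (rule ccontr)
  assume not_prop: "Prop r h \<notin> set \<tau>"
  have feas: "feasible K \<tau>" using assms(1) by (simp add: maximal_feasible_def)
  have unmatched: "r \<notin> res (tentative \<tau>)"
  proof
    assume "r \<in> res (tentative \<tau>)"
    then obtain h'' where prop'': "Prop r h'' \<in> set \<tau>" and not_rej'': "Rej r h'' \<notin> set \<tau>"
      by (auto simp: res_def tentative_def proposed_def rejected_def)
    have "h'' \<noteq> h" using not_prop prop'' by auto
    moreover have "h'' \<in> set (rpref K r)" using feasible_proposal[OF feas prop''] by blast
    ultimately consider "h'' \<in> set (takeWhile (\<lambda>x. x \<noteq> h) (rpref K r))"
      | "h \<in> set (takeWhile (\<lambda>x. x \<noteq> h'') (rpref K r))"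
      using takeWhile_neq_cases[OF _ acceptable] by metis
    then show False
    proof cases
      case 1
      then have "Rej r h'' \<in> set \<sigma>" using before by (simp add: rejected_def)
      then show False using not_rej'' assms(2) by blast
    next
      case 2
      then have "Rej r h \<in> set \<tau>" using feasible_proposal[OF feas prop''] by blast
      then show False using feasible_rejection_proposed[OF feas] not_prop by blast
    qed
  qed
  have "feasible K (\<tau> @ [Prop r h])"
  proof (rule feasible.Propose[OF feas unmatched _ acceptable])
    show "(r, h) \<notin> proposed \<tau>" using not_prop by (simp add: proposed_def)
    show "\<forall>h'\<in>set (takeWhile (\<lambda>x. x \<noteq> h) (rpref K r)). (r, h') \<in> rejected \<tau>"
      using before assms(2) by (auto simp: rejected_def)
  qed
  then show False by (rule maximal_feasible_extend[OF assms(1)])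
qed

lemma feasible_subset_maximal:
  assumes "feasible K \<sigma>" "maximal_feasible K \<tau>"
  shows "set \<sigma> \<subseteq> set \<tau>"
  using assms(1)
proof (induction rule: feasible.induct)
  case Nil
  then show ?case by simp
next
  case (Propose \<sigma> r h)
  have "Prop r h \<in> set \<tau>"
    using maximal_feasible_contains_proposal[OF assms(2) Propose.IH Propose.hyps(4,5)] .
  then show ?case using Propose.IH by simp
next
  case (Reject \<sigma> r h)
  have feas: "feasible K \<tau>" using assms(2) by (simp add: maximal_feasible_def)
  have "Rej r h \<in> set \<tau>"
  proof (rule ccontr)
    assume "Rej r h \<notin> set \<tau>"
    then have not_rej: "(r,h) \<notin> rejected \<tau>" by (simp add: rejected_def)
    have "proposed \<sigma> \<subseteq> proposed \<tau>" using Reject.IH by (auto simp: proposed_def)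
    then have "ousted K (proposed \<tau>) r h" by (rule ousted_mono[OF Reject.hyps(2)])
    then have "feasible K (\<tau> @ [Rej r h])" using feasible.Reject[OF feas _ not_rej] by blast
    then show False by (rule maximal_feasible_extend[OF assms(2)])
  qed
  then show ?case using Reject.IH by simp
qed

lemma maximal_feasible_rejected:
  assumes "maximal_feasible K \<tau>"
  shows "rejected \<tau> = {(r,h). ousted K (proposed \<tau>) r h}"
proof -
  have feas: "feasible K \<tau>" using assms by (simp add: maximal_feasible_def)
  have "(r,h) \<in> rejected \<tau>" if "ousted K (proposed \<tau>) r h" for r h
    using feasible.Reject[OF feas that] maximal_feasible_extend[OF assms] by blast
  then show ?thesis using feasible_rejection_ousted[OF feas] by (auto simp: rejected_def)
qed

lemma maximal_feasible_tentative:
  assumes "maximal_feasible K \<tau>"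
  shows "tentative \<tau> = {(r,h) \<in> proposed \<tau>. \<not> ousted K (proposed \<tau>) r h}"
  using maximal_feasible_rejected[OF assms] by (auto simp: tentative_def)

lemma feasible_events_subset:
  assumes "valid_instance R H K" "feasible K \<tau>"
  shows "set \<tau> \<subseteq> {Prop r h | r h. r \<in> R \<and> h \<in> H} \<union> {Rej r h | r h. r \<in> R \<and> h \<in> H}"
proof
  fix e assume e: "e \<in> set \<tau>"
  show "e \<in> {Prop r h | r h. r \<in> R \<and> h \<in> H} \<union> {Rej r h | r h. r \<in> R \<and> h \<in> H}"
  proof (cases e)
    case (Prop r h)
    then have "r \<in> R \<and> h \<in> H"
      using e feasible_proposal[OF assms(2)] valid_instance_acceptable[OF assms(1)] by blast
    then show ?thesis using Prop by blast
  next
    case (Rej r h)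
    then have "Prop r h \<in> set \<tau>" using e feasible_rejection_proposed[OF assms(2)] by simp
    then have "r \<in> R \<and> h \<in> H"
      using feasible_proposal[OF assms(2)] valid_instance_acceptable[OF assms(1)] by blast
    then show ?thesis using Rej by blast
  qed
qed

lemma some_max_maximal:
  assumes "valid_instance R H K"
  shows "maximal_feasible K (some_max K)"
proof -
  let ?E = "{Prop r h | r h. r \<in> R \<and> h \<in> H} \<union> {Rej r h | r h. r \<in> R \<and> h \<in> H}"
  have "finite R" "finite H" using assms by (simp_all add: valid_instance_def)
  then have "finite ?E" by (intro finite_UnI finite_image_set2) simp_all
  then have "length \<tau> < Suc (card ?E)" if "feasible K \<tau>" for \<tau>
    using card_mono[OF _ feasible_events_subset[OF assms that]]
      distinct_card[OF feasible_distinct[OF that]] by simp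
  then obtain \<tau> where "feasible K \<tau>" and longest: "\<forall>\<tau>'. feasible K \<tau>' \<longrightarrow> length \<tau>' \<le> length \<tau>"
    using ex_has_greatest_nat[of "feasible K" "[]" length "Suc (card ?E)"] feasible.Nil by blast
  moreover have "\<not> feasible K (\<tau> @ [e])" for e
    using longest by fastforce
  ultimately have "maximal_feasible K \<tau>" by (simp add: maximal_feasible_def)
  then show ?thesis unfolding some_max_def by (rule someI)
qed

lemma feasible_extension:
  assumes "is_extension R H I J" "resident_changeless I J" "hospital_complete R H J"
    and "feasible I \<sigma>"
  shows "feasible J \<sigma>"
  using assms(4)
proof (induction rule: feasible.induct)
  case Nil
  then show ?case by (rule feasible.Nil)
next
  case (Propose \<sigma> r h)
  have "rpref J r = rpref I r" using assms(2) by (simp add: resident_changeless_def)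
  then show ?case using feasible.Propose[of J \<sigma> r h] Propose by simp
next
  case (Reject \<sigma> r h)
  have valid: "valid_instance R H I" using assms(1) by (simp add: is_extension_def)
  have "(r,h) \<in> proposed \<sigma>" using Reject.hyps(2) by (simp add: ousted_def)
  then have "h \<in> set (rpref I r)" using feasible_proposed_acceptable[OF Reject.hyps(1)] by blast
  then have "r \<in> R \<and> h \<in> H" by (rule valid_instance_acceptable[OF valid])
  then have quota: "quota J h = quota I h" and listed: "r \<in> set (hpref J h)"
    using assms(1,3) by (simp_all add: is_extension_def hospital_complete_def)
  obtain zs where "hpref J h = hpref I h @ zs" using assms(1) unfolding is_extension_def by blast
  then have "ousted J (proposed \<sigma>) r h"
    using quota listed Reject.hyps(2) by (rule ousted_append_hpref)
  then show ?case using feasible.Reject[OF Reject.IH] Reject.hyps(3) by blast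
qed

lemma tentative_listed_extension:
  assumes "is_extension R H I J" "maximal_feasible I \<sigma>" "maximal_feasible J \<tau>"
    and "proposed \<tau> = proposed \<sigma>" "(r,h) \<in> tentative \<sigma>" "r \<in> set (hpref I h)"
  shows "(r,h) \<in> tentative \<tau>"
proof -
  have proposed: "(r,h) \<in> proposed \<sigma>" and not_ousted: "\<not> ousted I (proposed \<sigma>) r h"
    using assms(5) maximal_feasible_tentative[OF assms(2)] by auto
  have valid: "valid_instance R H I" using assms(1) by (simp add: is_extension_def)
  have "feasible I \<sigma>" using assms(2) by (simp add: maximal_feasible_def)
  then have "h \<in> set (rpref I r)" using proposed feasible_proposed_acceptable by blast
  then have "h \<in> H" using valid_instance_acceptable[OF valid] by blast
  obtain zs where "hpref J h = hpref I h @ zs" using assms(1) unfolding is_extension_def by blast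
  moreover have "quota J h = quota I h" using assms(1) \<open>h \<in> H\<close> by (simp add: is_extension_def)
  ultimately have "ousted J (proposed \<sigma>) r h \<longleftrightarrow> ousted I (proposed \<sigma>) r h"
    using assms(6) by (rule ousted_append_hpref_iff)
  with not_ousted have "\<not> ousted J (proposed \<sigma>) r h" by simp
  then show ?thesis using proposed maximal_feasible_tentative[OF assms(3)] assms(4) by simp
qed

theorem proposition4:
  fixes R :: "'r set" and H :: "'h set" and I J :: "('r,'h) inst"
  assumes "valid_instance R H I"
    and "resident_minimal I"
    and "is_extension R H I J"
    and "resident_changeless I J"
    and "hospital_complete R H J"
  shows "resident_minimal J \<and> propI I = propI J
         \<and> tentI I - pendI I \<subseteq> tentI J \<and> tentI J \<subseteq> tentI I"
proof -
  define A where "A = {(r,h). h \<in> set (rpref I r)}"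
  have valid_J: "valid_instance R H J" using assms(3) by (simp add: is_extension_def)
  have rpref_eq: "rpref J = rpref I" using assms(4) by (auto simp: resident_changeless_def)
  have max_I: "maximal_feasible I (some_max I)" by (rule some_max_maximal[OF assms(1)])
  have max_J: "maximal_feasible J (some_max J)" by (rule some_max_maximal[OF valid_J])
  have prop_I: "proposed (some_max I) = A"
    using assms(2) by (simp add: resident_minimal_def propI_def A_def)
  have "feasible J (some_max I)"
    using feasible_extension[OF assms(3-5)] max_I by (simp add: maximal_feasible_def)
  then have events: "set (some_max I) \<subseteq> set (some_max J)"
    using feasible_subset_maximal max_J by blast
  have "proposed (some_max J) \<subseteq> A"
    using feasible_proposed_acceptable[of J] max_J rpref_eq by (simp add: maximal_feasible_def A_def)
  then have prop_J: "proposed (some_max J) = A"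
    using events prop_I by (auto simp: proposed_def)
  have "tentI I - pendI I \<subseteq> tentI J"
    using tentative_listed_extension[OF assms(3) max_I max_J] prop_I prop_J
    by (auto simp: tentI_def pendI_def pending_seq_def)
  moreover have "tentI J \<subseteq> tentI I"
    using events prop_I prop_J by (auto simp: tentI_def tentative_def rejected_def)
  ultimately show ?thesis
    using prop_I prop_J rpref_eq by (simp add: resident_minimal_def propI_def A_def)
qed

end
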